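(* Let $k,n$ be positive integers with $k\leqslant n$, and let $X\subseteq [n]^k_<$ be either an order ideal of $[n]^k_<$ (with respect to the Bruhat order) or a matroid. Then every linear extension of $X$ is a shelling order.
   Context: $[n]:=\{1,\ldots,n\}$. $[n]^k_<$ denotes the set of $k$-element subsets of $[n]$, each identified with the increasing tuple $x=(x_1<\cdots<x_k)$ of its elements; $A+B:=(A\setminus B)\cup(B\setminus A)$. The Bruhat order on $[n]^k_<$ is: $x\leqslant y$ iff $x_i\leqslant y_i$ for all $i\in[k]$. An order ideal is a subset $X$ such that $y\in X$ and $x\leqslant y$ imply $x\in X$. $X\subseteq[n]^k_<$ is a matroid if for all $A,B\in X$ and $a\in A\setminus B$ there exists $b\in B\setminus A$ with $A+\{a,b\}\in X$. A linear extension of $X$ is a tuple $L=(L_1,\ldots,L_h)$ listing every element of $X$ exactly once such that $L_i<L_j$ in the Bruhat order implies $i<j$. A tuple $C=(C_1,\ldots,C_h)$ of pairwise distinct elements of $[n]^k_<$ is a shelling order if for all $i<j$ in $[h]$ there exists $z<j$ with $|C_z\cap C_j|=k-1$ and $C_i\cap C_j\subseteq C_z\cap C_j$. *)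

theory Defs
  imports Main
begin

definition ksubsets :: "nat \<Rightarrow> nat \<Rightarrow> nat set set" where
  "ksubsets n k = {A. A \<subseteq> {1..n} \<and> card A = k}"

definition bruhat_le :: "nat set \<Rightarrow> nat set \<Rightarrow> bool" where
  "bruhat_le x y \<longleftrightarrow> card x = card y \<and>
     (\<forall>i < card x. sorted_list_of_set x ! i \<le> sorted_list_of_set y ! i)"

definition bruhat_less :: "nat set \<Rightarrow> nat set \<Rightarrow> bool" where
  "bruhat_less x y \<longleftrightarrow> bruhat_le x y \<and> x \<noteq> y"

definition order_ideal :: "nat \<Rightarrow> nat \<Rightarrow> nat set set \<Rightarrow> bool" where
  "order_ideal n k X \<longleftrightarrow> X \<subseteq> ksubsets n k \<and>
     (\<forall>y\<in>X. \<forall>x\<in>ksubsets n k. bruhat_le x y \<longrightarrow> x \<in> X)"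

definition symdiff :: "'a set \<Rightarrow> 'a set \<Rightarrow> 'a set" where
  "symdiff A B = (A - B) \<union> (B - A)"

definition is_matroid :: "nat \<Rightarrow> nat \<Rightarrow> nat set set \<Rightarrow> bool" where
  "is_matroid n k X \<longleftrightarrow> X \<subseteq> ksubsets n k \<and>
     (\<forall>A\<in>X. \<forall>B\<in>X. \<forall>a\<in>A - B. \<exists>b\<in>B - A. symdiff A {a, b} \<in> X)"

text \<open>Linear extension, as a list L (positions 0..h-1 instead of 1..h).\<close>
definition linear_extension :: "nat set set \<Rightarrow> nat set list \<Rightarrow> bool" where
  "linear_extension X L \<longleftrightarrow> distinct L \<and> set L = X \<and>
     (\<forall>i < length L. \<forall>j < length L. bruhat_less (L ! i) (L ! j) \<longrightarrow> i < j)"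

definition shelling_order :: "nat \<Rightarrow> nat \<Rightarrow> nat set list \<Rightarrow> bool" where
  "shelling_order n k C \<longleftrightarrow> distinct C \<and> set C \<subseteq> ksubsets n k \<and>
     (\<forall>i j. i < j \<and> j < length C \<longrightarrow>
        (\<exists>z < j. card (C ! z \<inter> C ! j) = k - 1 \<and> C ! i \<inter> C ! j \<subseteq> C ! z \<inter> C ! j))"

end

theory Submission
  imports Defs
begin

text \<open>
  Call A \<open>descending toward\<close> B in X if exchanging some a \<in> A - B for a smaller
  b \<in> B - A stays in X. For an order ideal and for a matroid, of two distinct members of X
  one always descends toward the other. Descending from A toward B until this is no longer
  possible shows that either B \<le> A in the Bruhat order, or B descends toward A, say to
  C = B - {b} \<union> {c}. If A comes before B in a linear extension, the first case is excluded;
  then C < B comes before B as well, and C \<inter> B = B - {b} has k - 1 elements and contains A \<inter> B.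
\<close>

lemma nth_sorted_list_of_set_le_iff:
  fixes x :: "'a::linorder set"
  assumes "finite x" and "i < card x"
  shows "sorted_list_of_set x ! i \<le> v \<longleftrightarrow> i < card {y\<in>x. y \<le> v}"
proof
  let ?xs = "sorted_list_of_set x"
  have sorted: "sorted ?xs" and len: "length ?xs = card x" by simp_all
  have mem: "?xs ! m \<in> x" if "m < card x" for m
    using assms(1) that by (metis len nth_mem set_sorted_list_of_set)
  assume le: "?xs ! i \<le> v"
  have "(!) ?xs ` {..i} \<subseteq> {y\<in>x. y \<le> v}"
    using mem assms(2) le sorted_nth_mono[OF sorted] len by (fastforce intro: order_trans)
  moreover have "inj_on ((!) ?xs) {..i}"
    using assms(2) distinct_sorted_list_of_set[of x] by (auto simp: inj_on_def nth_eq_iff_index_eq)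
  ultimately have "Suc i \<le> card {y\<in>x. y \<le> v}"
    using card_inj_on_le[of "(!) ?xs" "{..i}"] assms(1) by simp
  then show "i < card {y\<in>x. y \<le> v}" by simp
next
  let ?xs = "sorted_list_of_set x"
  assume lt: "i < card {y\<in>x. y \<le> v}"
  show "?xs ! i \<le> v"
  proof (rule ccontr)
    assume gt: "\<not> ?xs ! i \<le> v"
    have "{y\<in>x. y \<le> v} \<subseteq> (!) ?xs ` {..<i}"
    proof
      fix y assume y: "y \<in> {y\<in>x. y \<le> v}"
      then obtain m where m: "m < length ?xs" "y = ?xs ! m"
        using assms(1) by (metis mem_Collect_eq in_set_conv_nth set_sorted_list_of_set)
      have "m < i"
        using sorted_nth_mono[OF sorted_sorted_list_of_set, of i m x] m y gt by fastforce
      then show "y \<in> (!) ?xs ` {..<i}" using m by auto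
    qed
    then have "card {y\<in>x. y \<le> v} \<le> card ((!) ?xs ` {..<i})"
      by (simp add: card_mono)
    also have "\<dots> \<le> i"
      using card_image_le[of "{..<i}" "(!) ?xs"] by simp
    finally show False using lt by simp
  qed
qed

lemma bruhat_le_if_count_le:
  fixes x y :: "nat set"
  assumes "finite x" "finite y" "card x = card y"
    and "\<And>v. card {s\<in>y. s \<le> v} \<le> card {s\<in>x. s \<le> v}"
  shows "bruhat_le x y"
  unfolding bruhat_le_def
proof (intro conjI allI impI)
  fix i assume i: "i < card x"
  let ?v = "sorted_list_of_set y ! i"
  have "i < card {s\<in>y. s \<le> ?v}"
    using nth_sorted_list_of_set_le_iff[OF assms(2), of i ?v] i assms(3) by simp
  also have "\<dots> \<le> card {s\<in>x. s \<le> ?v}" by fact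
  finally show "sorted_list_of_set x ! i \<le> ?v"
    using nth_sorted_list_of_set_le_iff[OF assms(1) i] by simp
qed fact

lemma bruhat_le_exchange_down:
  fixes S :: "nat set"
  assumes "finite S" "b \<in> S" "c \<notin> S" "c < b"
  shows "bruhat_le (insert c (S - {b})) S"
proof (rule bruhat_le_if_count_le)
  show "card (insert c (S - {b})) = card S"
    using assms(1-3) card_Suc_Diff1 by fastforce
  fix v
  let ?f = "\<lambda>s. if s = b then c else s"
  have "inj_on ?f {s\<in>S. s \<le> v}"
    using assms(2,3) by (auto simp: inj_on_def)
  moreover have "?f ` {s\<in>S. s \<le> v} \<subseteq> {s\<in>insert c (S - {b}). s \<le> v}"
    using assms(4) by auto
  ultimately show "card {s\<in>S. s \<le> v} \<le> card {s\<in>insert c (S - {b}). s \<le> v}"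
    using assms(1) by (simp add: card_inj_on_le)
qed (use assms(1) in simp_all)

lemma bruhat_le_trans:
  assumes "bruhat_le x y" "bruhat_le y z"
  shows "bruhat_le x z"
  using assms unfolding bruhat_le_def by (fastforce intro: order_trans)

definition descends_toward :: "nat set set \<Rightarrow> nat set \<Rightarrow> nat set \<Rightarrow> bool" where
  "descends_toward X A B \<longleftrightarrow>
     (\<exists>a\<in>A - B. \<exists>b\<in>B - A. b < a \<and> insert b (A - {a}) \<in> X)"

lemma bruhat_le_or_descends_toward:
  assumes finite: "\<forall>A\<in>X. finite A"
    and exchange: "\<And>A B. A \<in> X \<Longrightarrow> B \<in> X \<Longrightarrow> A \<noteq> B \<Longrightarrow>
        descends_toward X A B \<or> descends_toward X B A"
    and "A \<in> X" "B \<in> X"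
  shows "bruhat_le B A \<or> descends_toward X B A"
  using assms(3,4)
proof (induction "card (A - B)" arbitrary: A rule: less_induct)
  case less
  consider "A = B" | "descends_toward X B A" | "descends_toward X A B"
    using exchange less.prems by blast
  then show ?case
  proof cases
    case 1
    then show ?thesis by (simp add: bruhat_le_def)
  next
    case 2
    then show ?thesis ..
  next
    case 3
    then obtain a b where ab: "a \<in> A - B" "b \<in> B - A" "b < a"
      and A'X: "insert b (A - {a}) \<in> X"
      unfolding descends_toward_def by blast
    let ?A' = "insert b (A - {a})"
    have "?A' - B = (A - B) - {a}" using ab by auto
    then have "card (?A' - B) < card (A - B)"
      using ab finite less.prems(1) by (metis card_Diff1_less finite_Diff)
    then have "bruhat_le B ?A' \<or> descends_toward X B ?A'"
      using less.hyps A'X less.prems(2) by blast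
    moreover have "bruhat_le ?A' A"
      using bruhat_le_exchange_down ab finite less.prems(1) by blast
    moreover have "B - ?A' \<subseteq> B - A" "?A' - B \<subseteq> A - B" using ab by auto
    ultimately show ?thesis
      unfolding descends_toward_def by (meson bruhat_le_trans subsetD)
  qed
qed

lemma ksubsets_diff_nonempty:
  assumes "A \<in> ksubsets n k" "B \<in> ksubsets n k" "A \<noteq> B"
  obtains a where "a \<in> A - B"
proof -
  have "finite B" using assms(2) unfolding ksubsets_def by (auto intro: finite_subset)
  then have "\<not> A \<subseteq> B"
    using assms unfolding ksubsets_def by (metis (mono_tags) card_subset_eq mem_Collect_eq)
  then show ?thesis using that by blast
qed

lemma order_ideal_exchange_down:
  assumes "order_ideal n k X" "A \<in> X" "a \<in> A" "b \<in> {1..n}" "b \<notin> A" "b < a"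
  shows "insert b (A - {a}) \<in> X"
proof -
  have A: "A \<subseteq> {1..n}" "card A = k"
    using assms(1,2) unfolding order_ideal_def ksubsets_def by auto
  then have "finite A" by (meson finite_atLeastAtMost finite_subset)
  then have "insert b (A - {a}) \<in> ksubsets n k"
    using A assms(3-5) card_Suc_Diff1 unfolding ksubsets_def by fastforce
  moreover have "bruhat_le (insert b (A - {a})) A"
    using bruhat_le_exchange_down \<open>finite A\<close> assms(3,5,6) by blast
  ultimately show ?thesis
    using assms(1,2) unfolding order_ideal_def by blast
qed

lemma order_ideal_descends_toward:
  assumes "order_ideal n k X" "A \<in> X" "B \<in> X" "A \<noteq> B"
  shows "descends_toward X A B \<or> descends_toward X B A"
proof -
  have sub: "X \<subseteq> ksubsets n k" using assms(1) unfolding order_ideal_def by blast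
  obtain a b where a: "a \<in> A - B" and b: "b \<in> B - A"
    using ksubsets_diff_nonempty assms(2-4) sub by (metis subsetD)
  have range: "A \<subseteq> {1..n}" "B \<subseteq> {1..n}"
    using sub assms(2,3) unfolding ksubsets_def by auto
  consider "b < a" | "a < b" using a b by fastforce
  then show ?thesis
  proof cases
    case 1
    then have "insert b (A - {a}) \<in> X"
      using order_ideal_exchange_down assms(1,2) a b range by blast
    then show ?thesis using 1 a b unfolding descends_toward_def by blast
  next
    case 2
    then have "insert a (B - {b}) \<in> X"
      using order_ideal_exchange_down assms(1,3) a b range by blast
    then show ?thesis using 2 a b unfolding descends_toward_def by blast
  qed
qed

lemma symdiff_pair: "a \<in> A \<Longrightarrow> b \<notin> A \<Longrightarrow> symdiff A {a, b} = insert b (A - {a})"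
  unfolding symdiff_def by auto

lemma matroid_exchange:
  assumes "is_matroid n k X" "A \<in> X" "B \<in> X" "a \<in> A - B"
  obtains b where "b \<in> B - A" "insert b (A - {a}) \<in> X"
  using assms symdiff_pair unfolding is_matroid_def by (metis DiffD1 DiffD2)

lemma matroid_descends_toward:
  assumes "is_matroid n k X" "A \<in> X" "B \<in> X" "A \<noteq> B"
  shows "descends_toward X A B \<or> descends_toward X B A"
proof -
  have sub: "X \<subseteq> ksubsets n k" using assms(1) unfolding is_matroid_def by blast
  have finite: "finite (A - B)"
    using sub assms(2) unfolding ksubsets_def by (auto intro: finite_subset)
  moreover have "A - B \<noteq> {}"
    using ksubsets_diff_nonempty assms(2-4) sub by (metis empty_iff subsetD)
  ultimately have a: "Max (A - B) \<in> A - B" by (rule Max_in)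
  \<comment> \<open>Maximality forces the element exchanged back into B to lie below b.\<close>
  have a_max: "\<forall>x\<in>A - B. x \<le> Max (A - B)" using finite by simp
  obtain b where b: "b \<in> B - A" "insert b (A - {Max (A - B)}) \<in> X"
    using matroid_exchange assms(1-3) a by blast
  consider "b < Max (A - B)" | "Max (A - B) < b" using a b by fastforce
  then show ?thesis
  proof cases
    case 1
    then show ?thesis using a b unfolding descends_toward_def by blast
  next
    case 2
    obtain c where c: "c \<in> A - B" "insert c (B - {b}) \<in> X"
      using matroid_exchange assms(1-3) b(1) by blast
    have "c < b" using a_max c(1) 2 le_less_trans by blast
    then show ?thesis using b c unfolding descends_toward_def by blast
  qed
qed

lemma linear_extension_shelling_order:
  assumes sub: "X \<subseteq> ksubsets n k" and L: "linear_extension X L"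
    and descent: "\<And>A B. A \<in> X \<Longrightarrow> B \<in> X \<Longrightarrow> bruhat_le B A \<or> descends_toward X B A"
  shows "shelling_order n k L"
  unfolding shelling_order_def
proof (intro conjI allI impI)
  show "distinct L" and "set L \<subseteq> ksubsets n k"
    using L sub unfolding linear_extension_def by auto
  have setL: "set L = X"
    and before: "\<And>i j. i < length L \<Longrightarrow> j < length L \<Longrightarrow> bruhat_less (L ! i) (L ! j) \<Longrightarrow> i < j"
    using L unfolding linear_extension_def by auto
  fix i j assume ij: "i < j \<and> j < length L"
  let ?A = "L ! i" and ?B = "L ! j"
  have AX: "?A \<in> X" and BX: "?B \<in> X" using ij setL by auto
  have "?A \<noteq> ?B" using ij \<open>distinct L\<close> by (simp add: nth_eq_iff_index_eq)
  then have "\<not> bruhat_le ?B ?A"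
    using before[of j i] ij unfolding bruhat_less_def by auto
  then obtain b c where bc: "b \<in> ?B - ?A" "c \<in> ?A - ?B" "c < b"
    and CX: "insert c (?B - {b}) \<in> X"
    using descent[OF AX BX] unfolding descends_toward_def by blast
  let ?C = "insert c (?B - {b})"
  obtain z where z: "z < length L" "L ! z = ?C" using CX setL by (metis in_set_conv_nth)
  have B: "finite ?B" "card ?B = k"
    using sub BX unfolding ksubsets_def by (auto intro: finite_subset)
  have "bruhat_less ?C ?B"
    using bruhat_le_exchange_down[OF B(1)] bc unfolding bruhat_less_def by auto
  then have "z < j" using before z ij by metis
  moreover have "?C \<inter> ?B = ?B - {b}" using bc by auto
  moreover have "card (?B - {b}) = k - 1" using B bc by simp
  moreover have "?A \<inter> ?B \<subseteq> ?B - {b}" using bc by auto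
  ultimately show "\<exists>z<j. card (L ! z \<inter> L ! j) = k - 1 \<and> L ! i \<inter> L ! j \<subseteq> L ! z \<inter> L ! j"
    using z by metis
qed

theorem corollary3p5:
  fixes n k :: nat and X :: "nat set set" and L :: "nat set list"
  assumes "0 < k" and "k \<le> n"
    and "order_ideal n k X \<or> is_matroid n k X"
    and "linear_extension X L"
  shows "shelling_order n k L"
proof -
  have sub: "X \<subseteq> ksubsets n k"
    using assms(3) unfolding order_ideal_def is_matroid_def by blast
  then have "\<forall>A\<in>X. finite A" unfolding ksubsets_def by (auto intro: finite_subset)
  moreover have "descends_toward X A B \<or> descends_toward X B A"
    if "A \<in> X" "B \<in> X" "A \<noteq> B" for A B
    using assms(3) that order_ideal_descends_toward matroid_descends_toward by blast
  ultimately show ?thesis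
    using linear_extension_shelling_order[OF sub assms(4)] bruhat_le_or_descends_toward by blast
qed

end
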